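(* Let $l\ge 2$ be an even integer and let $G=(V,E)$ be a finite, simple, undirected, connected graph whose vertex set is the disjoint union of $l$ sets $\mathcal{C}_1,\dots,\mathcal{C}_l$, where each $\mathcal{C}_j$ induces a complete graph (clique) and all these cliques are identical (same number of vertices, at least two), arranged in a circle: for each $j$ (indices modulo $l$) there is exactly one edge between $\mathcal{C}_j$ and $\mathcal{C}_{j+1}$, and there are no other edges between distinct cliques. Let $\Pi_1=\{\mathcal{C}_1,\dots,\mathcal{C}_l\}$ and let $\Pi_2=\{\mathcal{C}_1\cup\mathcal{C}_2,\ \mathcal{C}_3\cup\mathcal{C}_4,\dots,\mathcal{C}_{l-1}\cup\mathcal{C}_l\}$ be the partition into the $l/2$ pairs of adjacent cliques. Then $\mathcal{P}^{\star}_{\Pi_1}>\mathcal{P}^{\star}_{\Pi_2}$.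
   Context: For a subset $\mathcal{C}\subseteq V$, let $m_i(\mathcal{C})$ be the number of edges with both endpoints in $\mathcal{C}$ and $m_e(\mathcal{C})$ the number of edges with exactly one endpoint in $\mathcal{C}$. The null-adjusted persistence of $\mathcal{C}$ is $\mathcal{P}^{\star}_{\mathcal{C}}=\frac{2m_i}{2m_i+m_e}-\frac{2m_i+m_e}{2m}$, where $m=|E|$. For a partition $\Pi$ of $V$, the total null-adjusted persistence is $\mathcal{P}^{\star}_{\Pi}=\sum_{\mathcal{C}\in\Pi}\mathcal{P}^{\star}_{\mathcal{C}}$. *)

theory Defs
  imports Complex_Main
begin

definition simple_graph :: "'a set \<Rightarrow> 'a set set \<Rightarrow> bool" where
  "simple_graph V E \<longleftrightarrow> finite V \<and>
     (\<forall>e\<in>E. \<exists>u v. u \<in> V \<and> v \<in> V \<and> u \<noteq> v \<and> e = {u, v})"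

definition graph_connected :: "'a set \<Rightarrow> 'a set set \<Rightarrow> bool" where
  "graph_connected V E \<longleftrightarrow>
     (\<forall>u\<in>V. \<forall>v\<in>V. (u, v) \<in> {(x, y). {x, y} \<in> E}\<^sup>*)"

definition m_int :: "'a set set \<Rightarrow> 'a set \<Rightarrow> nat" where
  "m_int E C = card {e \<in> E. e \<subseteq> C}"

definition m_ext :: "'a set set \<Rightarrow> 'a set \<Rightarrow> nat" where
  "m_ext E C = card {e \<in> E. card (e \<inter> C) = 1}"

definition persistence :: "'a set set \<Rightarrow> 'a set \<Rightarrow> real" where
  "persistence E C =
     2 * real (m_int E C) / (2 * real (m_int E C) + real (m_ext E C))
     - (2 * real (m_int E C) + real (m_ext E C)) / (2 * real (card E))"

definition partition_persistence :: "'a set set \<Rightarrow> 'a set set \<Rightarrow> real" where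
  "partition_persistence E P = (\<Sum>C\<in>P. persistence E C)"

end

theory Submission
  imports Defs "HOL-Library.Disjoint_Sets"
begin

(* Write the null-adjusted persistence as P(S) = alpha(S) - vol(S) / (2 m), where
   alpha(S) = 2 m_i / (2 m_i + m_e) is the persistence probability and vol(S) = 2 m_i + m_e
   is the sum of the degrees of the vertices of S. The volume is additive on disjoint sets,
   so merging two adjacent cliques leaves the null-model terms unchanged and only the
   persistence probabilities matter. A clique contains an edge and has at most two boundary
   edges (one if l = 2), so its persistence probability is at least 1/2 (resp. 2/3); a merged
   pair has persistence probability at most 1, and less than 1 if l >= 4, since then an edge
   leaves it. *)

definition cut_edges :: "'a set set \<Rightarrow> 'a set \<Rightarrow> 'a set \<Rightarrow> 'a set set" where
  "cut_edges E A B = {e \<in> E. e \<inter> A \<noteq> {} \<and> e \<inter> B \<noteq> {}}"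

definition volume :: "'a set set \<Rightarrow> 'a set \<Rightarrow> nat" where
  "volume E S = 2 * m_int E S + m_ext E S"

definition persistence_probability :: "'a set set \<Rightarrow> 'a set \<Rightarrow> real" where
  "persistence_probability E S = 2 * real (m_int E S) / real (volume E S)"

lemma cut_edges_commute: "cut_edges E A B = cut_edges E B A"
  unfolding cut_edges_def by blast

lemma simple_graph_card_edge: "simple_graph V E \<Longrightarrow> e \<in> E \<Longrightarrow> card e = 2"
  unfolding simple_graph_def by fastforce

lemma simple_graph_finite_edges:
  assumes "simple_graph V E"
  shows "finite E"
proof -
  have "finite V" and "E \<subseteq> Pow V"
    using assms unfolding simple_graph_def by auto
  then show ?thesis
    by (meson finite_Pow_iff finite_subset)
qed

lemma card_Int_of_card_2:
  assumes "card e = 2"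
  shows "card (e \<inter> S) = (if e \<subseteq> S then 2 else if e \<inter> S = {} then 0 else 1)"
proof -
  obtain u v where "e = {u, v}" and "u \<noteq> v"
    using card_2_iff[THEN iffD1, OF assms] by blast
  then show ?thesis
    by (cases "u \<in> S"; cases "v \<in> S") (simp_all add: Int_insert_left)
qed

lemma card_Int_eq_1_iff_of_card_2:
  assumes "card e = 2"
  shows "card (e \<inter> S) = 1 \<longleftrightarrow> \<not> e \<subseteq> S \<and> e \<inter> S \<noteq> {}"
  using card_Int_of_card_2[OF assms, of S] by simp

lemma card_2_not_meets_three_disjoint:
  assumes "card e = 2" and "e \<inter> A \<noteq> {}" and "e \<inter> B \<noteq> {}" and "e \<inter> D \<noteq> {}"
    and "A \<inter> B = {}" and "A \<inter> D = {}" and "B \<inter> D = {}"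
  shows False
proof -
  obtain u v where "e = {u, v}"
    using card_2_iff[THEN iffD1, OF assms(1)] by blast
  then show False
    using assms(2-7) by blast
qed

lemma volume_eq_sum_card_Int:
  assumes "simple_graph V E"
  shows "volume E S = (\<Sum>e\<in>E. card (e \<inter> S))"
proof -
  have fin: "finite E"
    using assms by (rule simple_graph_finite_edges)
  have "(\<Sum>e\<in>E. card (e \<inter> S)) =
      (\<Sum>e\<in>E. 2 * (if e \<subseteq> S then 1 else 0) + (if card (e \<inter> S) = 1 then 1 else 0))"
    using card_Int_of_card_2[OF simple_graph_card_edge[OF assms]] by (intro sum.cong) auto
  also have "\<dots> = 2 * card {e \<in> E. e \<subseteq> S} + card {e \<in> E. card (e \<inter> S) = 1}"
    using fin by (simp add: sum.distrib flip: sum_distrib_left sum.inter_filter)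
  finally show ?thesis
    unfolding volume_def m_int_def m_ext_def by simp
qed

lemma volume_Un:
  assumes "simple_graph V E" and "A \<inter> B = {}"
  shows "volume E (A \<union> B) = volume E A + volume E B"
proof -
  have "card (e \<inter> (A \<union> B)) = card (e \<inter> A) + card (e \<inter> B)" if "e \<in> E" for e
  proof -
    have "finite e"
      using simple_graph_card_edge[OF assms(1) that] card.infinite by fastforce
    then show ?thesis
      using assms(2) by (simp add: Int_Un_distrib card_Un_disjoint disjoint_iff)
  qed
  then show ?thesis
    by (simp add: volume_eq_sum_card_Int[OF assms(1)] sum.distrib)
qed

lemma persistence_eq:
  "persistence E S = persistence_probability E S - real (volume E S) / (2 * real (card E))"
  unfolding persistence_def persistence_probability_def volume_def by simp

lemma persistence_Un:
  assumes "simple_graph V E" and "A \<inter> B = {}"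
  shows "persistence E A + persistence E B - persistence E (A \<union> B) =
    persistence_probability E A + persistence_probability E B - persistence_probability E (A \<union> B)"
  using volume_Un[OF assms] by (simp add: persistence_eq add_divide_distrib)

lemma persistence_probability_le_1: "persistence_probability E S \<le> 1"
  unfolding persistence_probability_def volume_def by (simp add: divide_le_eq_1, arith)

lemma persistence_probability_less_1:
  "0 < m_ext E S \<Longrightarrow> persistence_probability E S < 1"
  unfolding persistence_probability_def volume_def by simp

lemma persistence_probability_ge:
  assumes "1 \<le> m_int E S" and "m_ext E S \<le> n"
  shows "2 / (2 + real n) \<le> persistence_probability E S"
proof -
  have "m_ext E S \<le> m_int E S * n"
    using assms by (metis mult_1 mult_le_mono1 order_trans)
  then have "2 * (2 * real (m_int E S) + real (m_ext E S)) \<le> 2 * real (m_int E S) * (2 + real n)"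
    by (simp add: algebra_simps flip: of_nat_mult)
  moreover have "0 < 2 * real (m_int E S) + real (m_ext E S)"
    using assms(1) by simp
  ultimately show ?thesis
    unfolding persistence_probability_def volume_def
    by (simp add: divide_simps)
qed

lemma partition_persistence_image:
  assumes "disjoint_family_on P I" and "\<And>i. i \<in> I \<Longrightarrow> P i \<noteq> {}"
  shows "partition_persistence E (P ` I) = (\<Sum>i\<in>I. persistence E (P i))"
proof -
  have "inj_on P I"
  proof (rule inj_onI)
    fix i j assume "i \<in> I" and "j \<in> I" and "P i = P j"
    then show "i = j"
      using disjoint_family_onD[OF assms(1) \<open>i \<in> I\<close> \<open>j \<in> I\<close>] assms(2) by auto
  qed
  then show ?thesis
    unfolding partition_persistence_def by (simp add: sum.reindex)
qed

locale ring_of_cliques =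
  fixes V :: "'a set" and E :: "'a set set" and C :: "nat \<Rightarrow> 'a set" and l :: nat
  assumes two_le_l: "2 \<le> l"
    and simple_graph: "simple_graph V E"
    and disjoint_cliques: "disjoint_family_on C {..<l}"
    and two_le_card_clique: "\<And>j. j < l \<Longrightarrow> 2 \<le> card (C j)"
    and clique_edge:
      "\<And>j u v. j < l \<Longrightarrow> u \<in> C j \<Longrightarrow> v \<in> C j \<Longrightarrow> u \<noteq> v \<Longrightarrow> {u, v} \<in> E"
    and card_cut_edges: "\<And>j. j < l \<Longrightarrow> card (cut_edges E (C j) (C (Suc j mod l))) = 1"
    and edge_cases: "\<And>e. e \<in> E \<Longrightarrow>
      (\<exists>j<l. e \<subseteq> C j) \<or> (\<exists>j<l. e \<in> cut_edges E (C j) (C (Suc j mod l)))"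
begin

definition prev :: "nat \<Rightarrow> nat" where
  "prev j = (if j = 0 then l - 1 else j - 1)"

lemma prev_less: "j < l \<Longrightarrow> prev j < l"
  using two_le_l by (auto simp: prev_def)

lemma prev_eq_if_Suc_mod_eq: "t < l \<Longrightarrow> j = Suc t mod l \<Longrightarrow> t = prev j"
  using two_le_l by (auto simp: prev_def mod_Suc split: if_splits)

lemma Suc_mod_prev: "j < l \<Longrightarrow> Suc (prev j) mod l = j"
  using two_le_l by (auto simp: prev_def)

lemma cliques_disjoint: "i < l \<Longrightarrow> j < l \<Longrightarrow> i \<noteq> j \<Longrightarrow> C i \<inter> C j = {}"
  by (rule disjoint_family_onD[OF disjoint_cliques]) simp_all

lemma clique_nonempty: "j < l \<Longrightarrow> C j \<noteq> {}"
  using two_le_card_clique[of j] by auto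

lemma finite_cut_edges: "finite (cut_edges E A B)"
  using simple_graph_finite_edges[OF simple_graph] by (simp add: cut_edges_def)

lemma one_le_m_int_clique:
  assumes "j < l"
  shows "1 \<le> m_int E (C j)"
proof -
  have "finite (C j)" and "\<not> card (C j) \<le> Suc 0"
    using two_le_card_clique[OF assms] by (auto intro: card_ge_0_finite)
  then obtain u v where "u \<in> C j" and "v \<in> C j" and "u \<noteq> v"
    using card_le_Suc0_iff_eq[OF \<open>finite (C j)\<close>] by blast
  then have "{u, v} \<in> {e \<in> E. e \<subseteq> C j}"
    using clique_edge[OF assms] by simp
  moreover have "finite {e \<in> E. e \<subseteq> C j}"
    using simple_graph_finite_edges[OF simple_graph] by simp
  ultimately show ?thesis
    unfolding m_int_def by (auto simp: Suc_le_eq card_gt_0_iff)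
qed

lemma cut_edge_meets_clique:
  assumes "t < l" and "j < l" and cut: "e \<in> cut_edges E (C t) (C (Suc t mod l))"
    and meets: "e \<inter> C j \<noteq> {}"
  shows "j = t \<or> j = Suc t mod l"
proof (rule ccontr)
  assume j: "\<not> (j = t \<or> j = Suc t mod l)"
  have "e \<in> E" and "e \<inter> C t \<noteq> {}" and "e \<inter> C (Suc t mod l) \<noteq> {}"
    using cut by (simp_all add: cut_edges_def)
  moreover have next_less: "Suc t mod l < l" and "t \<noteq> Suc t mod l"
    using assms(1) two_le_l by (auto simp: mod_Suc)
  ultimately show False
    using card_2_not_meets_three_disjoint[OF simple_graph_card_edge[OF simple_graph] _ _ meets]
      cliques_disjoint[OF assms(1) next_less] cliques_disjoint[OF assms(1,2)]
      cliques_disjoint[OF next_less assms(2)] j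
    by auto
qed

lemma boundary_clique_subset:
  assumes "j < l"
  shows "{e \<in> E. card (e \<inter> C j) = 1} \<subseteq>
    cut_edges E (C j) (C (Suc j mod l)) \<union> cut_edges E (C (prev j)) (C j)"
proof
  fix e assume "e \<in> {e \<in> E. card (e \<inter> C j) = 1}"
  then have e: "e \<in> E" and "card (e \<inter> C j) = 1"
    by auto
  then have not_sub: "\<not> e \<subseteq> C j" and meets: "e \<inter> C j \<noteq> {}"
    using card_Int_eq_1_iff_of_card_2[OF simple_graph_card_edge[OF simple_graph e]] by simp_all
  from edge_cases[OF e] obtain t where t: "t < l"
    and "e \<subseteq> C t \<or> e \<in> cut_edges E (C t) (C (Suc t mod l))"
    by blast
  then show "e \<in> cut_edges E (C j) (C (Suc j mod l)) \<union> cut_edges E (C (prev j)) (C j)"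
  proof (elim disjE)
    assume "e \<subseteq> C t"
    then show ?thesis
      using not_sub meets cliques_disjoint[OF t assms] by (cases "t = j") auto
  next
    assume cut: "e \<in> cut_edges E (C t) (C (Suc t mod l))"
    from cut_edge_meets_clique[OF t assms cut meets] show ?thesis
    proof
      assume "j = t"
      then show ?thesis
        using cut by simp
    next
      assume next_j: "j = Suc t mod l"
      then have "e \<in> cut_edges E (C t) (C j)"
        using cut by simp
      moreover have "t = prev j"
        using prev_eq_if_Suc_mod_eq[OF t next_j] .
      ultimately show ?thesis
        by simp
    qed
  qed
qed

lemma m_ext_clique_le:
  assumes "j < l"
  shows "m_ext E (C j) \<le> (if l = 2 then 1 else 2)"
proof -
  let ?X = "cut_edges E (C j) (C (Suc j mod l))" and ?Y = "cut_edges E (C (prev j)) (C j)"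
  have "m_ext E (C j) \<le> card (?X \<union> ?Y)"
    unfolding m_ext_def
    using boundary_clique_subset[OF assms] finite_cut_edges by (intro card_mono) auto
  moreover have "card ?X = 1" and "card ?Y = 1"
    using card_cut_edges[OF assms] card_cut_edges[OF prev_less[OF assms]] Suc_mod_prev[OF assms]
    by simp_all
  moreover have "?Y = ?X" if "l = 2"
  proof -
    have "j = 0 \<or> j = 1"
      using that assms by auto
    then have "prev j = Suc j mod l"
      unfolding prev_def using that by auto
    then show ?thesis
      by (simp add: cut_edges_commute[of E "C j"])
  qed
  ultimately show ?thesis
    using card_Un_le[of ?X ?Y] by (cases "l = 2") simp_all
qed

lemma m_ext_adjacent_pos:
  assumes "Suc j < l" and "3 \<le> l"
  shows "0 < m_ext E (C j \<union> C (Suc j))"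
proof -
  let ?n = "Suc (Suc j) mod l"
  have n: "?n < l" "?n \<noteq> j" "?n \<noteq> Suc j"
    using assms by (auto simp: mod_Suc)
  obtain e where e: "e \<in> cut_edges E (C (Suc j)) (C ?n)"
    using card_cut_edges[OF assms(1)] by (metis card_1_singletonE singletonI)
  then have "e \<in> E" and "e \<inter> C (Suc j) \<noteq> {}" and "e \<inter> C ?n \<noteq> {}"
    by (simp_all add: cut_edges_def)
  moreover have "C ?n \<inter> (C j \<union> C (Suc j)) = {}"
    using cliques_disjoint[OF n(1) _ n(2)] cliques_disjoint[OF n(1) assms(1) n(3)] assms(1)
    by auto
  ultimately have "card (e \<inter> (C j \<union> C (Suc j))) = 1"
    using card_Int_eq_1_iff_of_card_2[OF simple_graph_card_edge[OF simple_graph \<open>e \<in> E\<close>]]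
    by blast
  then have "{e \<in> E. card (e \<inter> (C j \<union> C (Suc j))) = 1} \<noteq> {}"
    using \<open>e \<in> E\<close> by blast
  moreover have "finite {e \<in> E. card (e \<inter> (C j \<union> C (Suc j))) = 1}"
    using simple_graph_finite_edges[OF simple_graph] by simp
  ultimately show ?thesis
    unfolding m_ext_def by (simp add: card_gt_0_iff)
qed

lemma disjoint_adjacent_pairs:
  "disjoint_family_on (\<lambda>i. C (2 * i) \<union> C (2 * i + 1)) {..<l div 2}"
  unfolding disjoint_family_on_def
proof (intro ballI impI)
  fix i j assume "i \<in> {..<l div 2}" and "j \<in> {..<l div 2}" and "i \<noteq> j"
  then have "2 * i + 1 < l" "2 * j + 1 < l" "2 * i \<noteq> 2 * j" "2 * i \<noteq> 2 * j + 1"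
    "2 * i + 1 \<noteq> 2 * j" "2 * i + 1 \<noteq> 2 * j + 1"
    by auto
  then show "(C (2 * i) \<union> C (2 * i + 1)) \<inter> (C (2 * j) \<union> C (2 * j + 1)) = {}"
    using cliques_disjoint[of "2 * i" "2 * j"] cliques_disjoint[of "2 * i" "2 * j + 1"]
      cliques_disjoint[of "2 * i + 1" "2 * j"] cliques_disjoint[of "2 * i + 1" "2 * j + 1"]
    by auto
qed

lemma persistence_adjacent_Un_less:
  assumes "Suc j < l"
  shows "persistence E (C j \<union> C (Suc j)) < persistence E (C j) + persistence E (C (Suc j))"
proof -
  have j: "j < l" using assms by simp
  have lower: "2 / (2 + real (if l = 2 then 1 else 2)) \<le> persistence_probability E (C i)"
    if "i < l" for i
    using persistence_probability_ge[OF one_le_m_int_clique[OF that] m_ext_clique_le[OF that]] .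
  have "persistence_probability E (C j \<union> C (Suc j)) <
      persistence_probability E (C j) + persistence_probability E (C (Suc j))"
  proof (cases "l = 2")
    case True
    then show ?thesis
      using lower[OF j] lower[OF assms] persistence_probability_le_1[of E "C j \<union> C (Suc j)"]
      by simp
  next
    case False
    then have "persistence_probability E (C j \<union> C (Suc j)) < 1"
      using two_le_l m_ext_adjacent_pos[OF assms] persistence_probability_less_1 by simp
    then show ?thesis
      using False lower[OF j] lower[OF assms] by simp
  qed
  moreover have "C j \<inter> C (Suc j) = {}"
    using cliques_disjoint[OF j assms] by simp
  ultimately show ?thesis
    using persistence_Un[OF simple_graph, of "C j" "C (Suc j)"] by linarith
qed

end

theorem proposition4:
  fixes V :: "'a set" and E :: "'a set set" and C :: "nat \<Rightarrow> 'a set"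
    and l k :: nat
  assumes "even l" and "l \<ge> 2"
    and "simple_graph V E" and "graph_connected V E"
    and "(\<Union>j<l. C j) = V"
    and "\<And>i j. i < l \<Longrightarrow> j < l \<Longrightarrow> i \<noteq> j \<Longrightarrow> C i \<inter> C j = {}"
    and "k \<ge> 2" and "\<And>j. j < l \<Longrightarrow> card (C j) = k"
    and "\<And>j u v. j < l \<Longrightarrow> u \<in> C j \<Longrightarrow> v \<in> C j \<Longrightarrow> u \<noteq> v \<Longrightarrow> {u, v} \<in> E"
    and "\<And>j. j < l \<Longrightarrow>
           card {e \<in> E. e \<inter> C j \<noteq> {} \<and> e \<inter> C (Suc j mod l) \<noteq> {}} = 1"
    and "\<And>e. e \<in> E \<Longrightarrow> (\<exists>j<l. e \<subseteq> C j) \<or>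
           (\<exists>j<l. e \<inter> C j \<noteq> {} \<and> e \<inter> C (Suc j mod l) \<noteq> {})"
  shows "partition_persistence E (C ` {..<l})
       > partition_persistence E ((\<lambda>i. C (2 * i) \<union> C (2 * i + 1)) ` {..<l div 2})"
proof -
  interpret ring_of_cliques V E C l
    using assms by unfold_locales (auto simp: disjoint_family_on_def cut_edges_def)
  define D where "D = (\<lambda>i. C (2 * i) \<union> C (2 * i + 1))"
  have "partition_persistence E (D ` {..<l div 2}) = (\<Sum>i<l div 2. persistence E (D i))"
    unfolding D_def
    by (rule partition_persistence_image) (use disjoint_adjacent_pairs clique_nonempty in auto)
  also have "\<dots> < (\<Sum>i<l div 2. persistence E (C (2 * i)) + persistence E (C (2 * i + 1)))"
    using persistence_adjacent_Un_less \<open>2 \<le> l\<close>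
    by (intro sum_strict_mono) (auto simp: D_def lessThan_empty_iff)
  also have "\<dots> = (\<Sum>j<l. persistence E (C j))"
    using sum_split_even_odd[of "\<lambda>j. persistence E (C j)" "\<lambda>j. persistence E (C j)" "l div 2"]
      \<open>even l\<close>
    by (simp add: sum.distrib)
  also have "\<dots> = partition_persistence E (C ` {..<l})"
    by (rule partition_persistence_image[symmetric]) (use disjoint_cliques clique_nonempty in auto)
  finally show ?thesis
    by (simp add: D_def)
qed

end
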